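(* Let $\mathcal{G}$ be a connected undirected graph with $n$ nodes, $m$ edges and incidence matrix $B$; let $p\ge1$, $E=\begin{bmatrix} I_{p}\\ \mathbf{0}_{(n-p)\times p}\end{bmatrix}$, $d\in\mathbb{R}^n$, $Q=\operatorname{diag}(q_1,\dots,q_p)$ with $q_i>0$, $r\in\mathbb{R}^p$, $s\in\mathbb{R}$ and $C(u)=\frac12u^TQu+r^Tu+s$. Let $h(x)=(h_1(x_1),\dots,h_n(x_n))^T$, let $B_c\in\mathbb{R}^{n\times l}$ be the incidence matrix of a (not necessarily connected) graph on the same node set, let $E_c\in\mathbb{R}^{n\times p_c}$ be a matrix whose columns are distinct standard unit vectors of $\mathbb{R}^n$, let $\gamma:\mathbb{R}^l\to\mathbb{R}^l$ and $\eta:\mathbb{R}^{p_c}\to\mathbb{R}^{p_c}$ act componentwise, and define $\Psi(x)=-B_c\gamma(B_c^Th(x))-E_c\eta(E_c^Th(x))$. Fix $\overline x\in\mathbb{R}^n$. Then the solution (in the variable $u$) of $$\min_{u,\lambda}C(u)\quad\text{subject to}\quad\mathbf{0}=\Psi(\overline x)-B\lambda+Eu-d$$ is given by $\hat u=Q^{-1}(\hat\kappa-r)$, where $\hat\kappa=E^T\frac{\mathbb{1}_n\mathbb{1}_n^T}{\mathbb{1}_p^TQ^{-1}\mathbb{1}_p}(\hat d+EQ^{-1}r)$ and $\hat d=d+E_c\eta(E_c^Th(\overline x))$.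
   Context: $\mathbb{1}_k$ is the all-ones vector of length $k$. An incidence matrix is obtained by arbitrarily orienting each edge: entry $(i,k)$ is $+1$ if node $i$ is the positive end of edge $k$, $-1$ if the negative end, $0$ otherwise. "Acts componentwise" means $\gamma(a)=(\gamma_1(a_1),\dots,\gamma_l(a_l))^T$ and similarly for $\eta$. *)

theory Defs
  imports Main "HOL-Library.Multiset" Complex_Main
begin

text \<open>Vectors in R^k are functions nat => real, only indices < k are meaningful.
  Matrices are functions nat => nat => real (row, column).
  A graph on nodes 0..n-1 is given by a list of edges (a,b); the order (a,b)
  fixes the (arbitrary) orientation used for the incidence matrix.\<close>

definition graph_on :: "nat \<Rightarrow> (nat \<times> nat) list \<Rightarrow> bool" where
  "graph_on n es \<longleftrightarrow>
     (\<forall>e\<in>set es. fst e < n \<and> snd e < n \<and> fst e \<noteq> snd e) \<and>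
     distinct (map (\<lambda>e. {fst e, snd e}) es)"

definition graph_connected :: "nat \<Rightarrow> (nat \<times> nat) list \<Rightarrow> bool" where
  "graph_connected n es \<longleftrightarrow>
     (\<forall>i<n. \<forall>j<n. (\<lambda>a b. (a, b) \<in> set es \<or> (b, a) \<in> set es)\<^sup>*\<^sup>* i j)"

definition incidence :: "(nat \<times> nat) list \<Rightarrow> nat \<Rightarrow> nat \<Rightarrow> real" where
  "incidence es i k = (if fst (es ! k) = i then 1 else if snd (es ! k) = i then -1 else 0)"

text \<open>E_c: column k is the standard unit vector e_(c k).\<close>
definition unit_columns :: "nat \<Rightarrow> nat \<Rightarrow> (nat \<Rightarrow> nat) \<Rightarrow> bool" where
  "unit_columns n pc c \<longleftrightarrow> (\<forall>k<pc. c k < n) \<and> inj_on c {..<pc}"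

definition sel_matrix :: "(nat \<Rightarrow> nat) \<Rightarrow> nat \<Rightarrow> nat \<Rightarrow> real" where
  "sel_matrix c i k = (if c k = i then 1 else 0)"

text \<open>E = [I_p; 0] (n x p)\<close>
definition Emat :: "nat \<Rightarrow> nat \<Rightarrow> real" where
  "Emat i j = (if i = j then 1 else 0)"

definition mv :: "(nat \<Rightarrow> nat \<Rightarrow> real) \<Rightarrow> nat \<Rightarrow> (nat \<Rightarrow> real) \<Rightarrow> nat \<Rightarrow> real" where
  "mv A nc v = (\<lambda>i. \<Sum>j<nc. A i j * v j)"

definition mtv :: "(nat \<Rightarrow> nat \<Rightarrow> real) \<Rightarrow> nat \<Rightarrow> (nat \<Rightarrow> real) \<Rightarrow> nat \<Rightarrow> real" where
  "mtv A nr v = (\<lambda>j. \<Sum>i<nr. A i j * v i)"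

definition cw :: "(nat \<Rightarrow> real \<Rightarrow> real) \<Rightarrow> (nat \<Rightarrow> real) \<Rightarrow> nat \<Rightarrow> real" where
  "cw f v = (\<lambda>i. f i (v i))"

definition Psi :: "nat \<Rightarrow> (nat \<times> nat) list \<Rightarrow> nat \<Rightarrow> (nat \<Rightarrow> nat)
    \<Rightarrow> (nat \<Rightarrow> real \<Rightarrow> real) \<Rightarrow> (nat \<Rightarrow> real \<Rightarrow> real) \<Rightarrow> (nat \<Rightarrow> real \<Rightarrow> real)
    \<Rightarrow> (nat \<Rightarrow> real) \<Rightarrow> nat \<Rightarrow> real" where
  "Psi n esc pc c h \<gamma> \<eta> x = (\<lambda>i.
      - mv (incidence esc) (length esc) (cw \<gamma> (mtv (incidence esc) n (cw h x))) i
      - mv (sel_matrix c) pc (cw \<eta> (mtv (sel_matrix c) n (cw h x))) i)"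

definition Qmat :: "(nat \<Rightarrow> real) \<Rightarrow> nat \<Rightarrow> nat \<Rightarrow> real" where
  "Qmat q i j = (if i = j then q i else 0)"

definition Qinv :: "(nat \<Rightarrow> real) \<Rightarrow> nat \<Rightarrow> nat \<Rightarrow> real" where
  "Qinv q i j = (if i = j then 1 / q i else 0)"

definition cost :: "nat \<Rightarrow> (nat \<Rightarrow> real) \<Rightarrow> (nat \<Rightarrow> real) \<Rightarrow> real \<Rightarrow> (nat \<Rightarrow> real) \<Rightarrow> real" where
  "cost p q r s u = 1/2 * (\<Sum>i<p. u i * mv (Qmat q) p u i) + (\<Sum>i<p. r i * u i) + s"

definition feasible :: "nat \<Rightarrow> (nat \<times> nat) list \<Rightarrow> nat \<Rightarrow> (nat \<Rightarrow> real) \<Rightarrow> (nat \<Rightarrow> real)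
    \<Rightarrow> (nat \<Rightarrow> real) \<Rightarrow> (nat \<Rightarrow> real) \<Rightarrow> bool" where
  "feasible n es p psi d u lam \<longleftrightarrow>
     (\<forall>i<n. 0 = psi i - mv (incidence es) (length es) lam i + mv Emat p u i - d i)"

definition dhat :: "nat \<Rightarrow> nat \<Rightarrow> (nat \<Rightarrow> nat) \<Rightarrow> (nat \<Rightarrow> real \<Rightarrow> real) \<Rightarrow> (nat \<Rightarrow> real \<Rightarrow> real)
    \<Rightarrow> (nat \<Rightarrow> real) \<Rightarrow> (nat \<Rightarrow> real) \<Rightarrow> nat \<Rightarrow> real" where
  "dhat n pc c h \<eta> d xbar = (\<lambda>i.
      d i + mv (sel_matrix c) pc (cw \<eta> (mtv (sel_matrix c) n (cw h xbar))) i)"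

definition kappa_hat :: "nat \<Rightarrow> nat \<Rightarrow> (nat \<Rightarrow> real) \<Rightarrow> (nat \<Rightarrow> real) \<Rightarrow> (nat \<Rightarrow> real) \<Rightarrow> nat \<Rightarrow> real" where
  "kappa_hat n p q r dh =
     mtv Emat n
       (mv (\<lambda>i j. 1 / (\<Sum>a<p. \<Sum>b<p. Qinv q a b)) n
          (\<lambda>k. dh k + mv Emat p (mv (Qinv q) p r) k))"

definition u_hat :: "nat \<Rightarrow> (nat \<Rightarrow> real) \<Rightarrow> (nat \<Rightarrow> real) \<Rightarrow> (nat \<Rightarrow> real) \<Rightarrow> nat \<Rightarrow> real" where
  "u_hat p q r \<kappa> = mv (Qinv q) p (\<lambda>i. \<kappa> i - r i)"

end

theory Submission
  imports Defs
begin

text \<open>Summing the constraint over all nodes kills the term \<open>B \<lambda>\<close>, because every column of an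
  incidence matrix sums to zero; for a connected graph the range of \<open>B\<close> is exactly the
  zero-sum vectors, so feasibility of \<open>u\<close> reduces to the single equation
  \<open>\<Sum>i<p. u i = \<Sum>k<n. dhat k\<close>.  Minimising the separable cost \<open>\<Sum> q\<^sub>i u\<^sub>i\<^sup>2/2 + r\<^sub>i u\<^sub>i\<close>
  under one sum constraint is solved by a Lagrange multiplier \<open>\<kappa>\<close> with \<open>q\<^sub>i u\<^sub>i + r\<^sub>i = \<kappa>\<close>,
  and \<open>\<kappa>\<close> is fixed by the constraint; this is the constant vector \<open>kappa_hat\<close>.\<close>

lemma mv_add: "mv A nc (\<lambda>j. x j + y j) i = mv A nc x i + mv A nc y i"
  by (simp add: mv_def sum.distrib distrib_left)

lemma mv_uminus: "mv A nc (\<lambda>j. - x j) i = - mv A nc x i"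
  by (simp add: mv_def sum_negf)

lemma mv_sum: "mv A nc (\<lambda>j. \<Sum>t\<in>T. f t j) i = (\<Sum>t\<in>T. mv A nc (f t) i)"
  by (simp add: mv_def sum_distrib_left sum.swap[of _ T])

lemma mv_mult: "mv A nc (\<lambda>j. a * x j) i = a * mv A nc x i"
  by (simp add: mv_def sum_distrib_left mult_ac)

lemma sum_mv: "(\<Sum>i<n. mv A nc v i) = (\<Sum>j<nc. v j * (\<Sum>i<n. A i j))"
  unfolding mv_def by (subst sum.swap) (simp add: sum_distrib_left mult_ac)

lemma mv_const: "mv (\<lambda>_ _. a) nc v i = a * (\<Sum>j<nc. v j)"
  by (simp add: mv_def sum_distrib_left)

lemma mtv_Emat: "j < n \<Longrightarrow> mtv Emat n v j = v j"
  by (simp add: mtv_def Emat_def if_distrib[of "\<lambda>x. x * _"] cong: if_cong)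

lemma mv_Qinv: "i < p \<Longrightarrow> mv (Qinv q) p u i = u i / q i"
  by (simp add: mv_def Qinv_def if_distrib[of "\<lambda>x. x * _"] cong: if_cong)

lemma mv_Qmat: "i < p \<Longrightarrow> mv (Qmat q) p u i = q i * u i"
  by (simp add: mv_def Qmat_def if_distrib[of "\<lambda>x. x * _"] cong: if_cong)

lemma incidence_column_sum:
  assumes "graph_on n es" "k < length es"
  shows "(\<Sum>i<n. incidence es i k) = 0"
proof -
  obtain a b where e: "es ! k = (a, b)" by fastforce
  with assms have "a < n" "b < n" "a \<noteq> b"
    unfolding graph_on_def by (metis fst_conv snd_conv nth_mem)+
  moreover have "incidence es i k = of_bool (i = a) - of_bool (i = b)" for i
    using \<open>a \<noteq> b\<close> e by (auto simp: incidence_def)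
  ultimately show ?thesis by (simp add: sum_subtractf)
qed

lemma sum_mv_incidence:
  "graph_on n es \<Longrightarrow> (\<Sum>i<n. mv (incidence es) (length es) v i) = 0"
  by (simp add: sum_mv incidence_column_sum)

lemma sum_mv_sel_matrix:
  "unit_columns n pc c \<Longrightarrow> (\<Sum>i<n. mv (sel_matrix c) pc v i) = (\<Sum>k<pc. v k)"
  by (simp add: sum_mv sel_matrix_def unit_columns_def)

lemma sum_mv_Emat: "p \<le> n \<Longrightarrow> (\<Sum>i<n. mv Emat p u i) = (\<Sum>j<p. u j)"
  by (simp add: sum_mv Emat_def)

definition incidence_range :: "nat \<Rightarrow> (nat \<times> nat) list \<Rightarrow> (nat \<Rightarrow> real) set" where
  "incidence_range n es = {w. \<exists>lam. \<forall>i<n. w i = mv (incidence es) (length es) lam i}"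

lemma incidence_range_zero: "(\<lambda>_. 0) \<in> incidence_range n es"
  unfolding incidence_range_def by (rule CollectI, rule exI[of _ "\<lambda>_. 0"]) (simp add: mv_def)

lemma incidence_range_add:
  assumes "v \<in> incidence_range n es" "w \<in> incidence_range n es"
  shows "(\<lambda>i. v i + w i) \<in> incidence_range n es"
proof -
  obtain lv lw where "\<forall>i<n. v i = mv (incidence es) (length es) lv i"
    and "\<forall>i<n. w i = mv (incidence es) (length es) lw i"
    using assms unfolding incidence_range_def by blast
  then show ?thesis
    unfolding incidence_range_def by (auto simp: mv_add[symmetric] intro!: exI[of _ "\<lambda>k. lv k + lw k"])
qed

lemma incidence_range_uminus:
  assumes "w \<in> incidence_range n es"
  shows "(\<lambda>i. - w i) \<in> incidence_range n es"
proof -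
  obtain lw where "\<forall>i<n. w i = mv (incidence es) (length es) lw i"
    using assms unfolding incidence_range_def by blast
  then show ?thesis
    unfolding incidence_range_def by (auto simp: mv_uminus[symmetric] intro!: exI[of _ "\<lambda>k. - lw k"])
qed

lemma incidence_range_lincomb:
  assumes "\<And>j. j \<in> J \<Longrightarrow> L j \<in> incidence_range n es"
  shows "(\<lambda>i. \<Sum>j\<in>J. a j * L j i) \<in> incidence_range n es"
proof -
  have "\<forall>j\<in>J. \<exists>lam. \<forall>i<n. L j i = mv (incidence es) (length es) lam i"
    using assms unfolding incidence_range_def by blast
  from bchoice[OF this] obtain lam
    where lam: "\<forall>j\<in>J. \<forall>i<n. L j i = mv (incidence es) (length es) (lam j) i"
    by blast
  show ?thesis
    unfolding incidence_range_def
  proof (intro CollectI exI allI impI)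
    fix i assume "i < n"
    then show "(\<Sum>j\<in>J. a j * L j i) = mv (incidence es) (length es) (\<lambda>k. \<Sum>j\<in>J. a j * lam j k) i"
      using lam by (simp add: mv_sum mv_mult)
  qed
qed

lemma incidence_range_cong:
  "w \<in> incidence_range n es \<Longrightarrow> (\<And>i. i < n \<Longrightarrow> w i = v i) \<Longrightarrow> v \<in> incidence_range n es"
  unfolding incidence_range_def by simp

lemma edge_vector_in_incidence_range:
  assumes "(a, b) \<in> set es"
  shows "(\<lambda>i. of_bool (i = a) - of_bool (i = b)) \<in> incidence_range n es"
proof (cases "a = b")
  case True
  then show ?thesis using incidence_range_zero by simp
next
  case False
  obtain k where k: "k < length es" "es ! k = (a, b)"
    using assms by (metis in_set_conv_nth)
  have "mv (incidence es) (length es) (\<lambda>j. of_bool (j = k)) i = of_bool (i = a) - of_bool (i = b)"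
    for i using k False by (simp add: mv_def incidence_def)
  then show ?thesis
    unfolding incidence_range_def by (auto intro!: exI[of _ "\<lambda>j. of_bool (j = k)"])
qed

lemma path_vector_in_incidence_range:
  assumes "(\<lambda>a b. (a, b) \<in> set es \<or> (b, a) \<in> set es)\<^sup>*\<^sup>* x y"
  shows "(\<lambda>i. of_bool (i = x) - of_bool (i = y)) \<in> incidence_range n es"
  using assms
proof (induction rule: rtranclp_induct)
  case base
  then show ?case using incidence_range_zero by simp
next
  case (step y z)
  have "(\<lambda>i. of_bool (i = y) - of_bool (i = z)) \<in> incidence_range n es"
    using step.hyps(2)
  proof
    assume "(z, y) \<in> set es"
    from incidence_range_uminus[OF edge_vector_in_incidence_range[OF this]]
    show ?thesis by simp
  qed (rule edge_vector_in_incidence_range)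
  from incidence_range_add[OF step.IH this] show ?case by simp
qed

lemma incidence_range_iff_sum_zero:
  assumes "graph_on n es" "graph_connected n es"
  shows "w \<in> incidence_range n es \<longleftrightarrow> (\<Sum>i<n. w i) = 0"
proof
  assume "w \<in> incidence_range n es"
  then obtain lam where "\<forall>i<n. w i = mv (incidence es) (length es) lam i"
    unfolding incidence_range_def by blast
  then have "(\<Sum>i<n. w i) = (\<Sum>i<n. mv (incidence es) (length es) lam i)"
    by (intro sum.cong) simp_all
  with sum_mv_incidence[OF assms(1)] show "(\<Sum>i<n. w i) = 0" by simp
next
  assume sum0: "(\<Sum>i<n. w i) = 0"
  show "w \<in> incidence_range n es"
  proof (cases "n = 0")
    case True
    then show ?thesis by (simp add: incidence_range_def)
  next
    case False
    text \<open>Write \<open>w\<close> as a combination of the path vectors \<open>e\<^sub>j - e\<^sub>0\<close>; the \<open>e\<^sub>0\<close>-part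
      carries the total sum, which is zero.\<close>
    have "(\<lambda>i. \<Sum>j<n. w j * (of_bool (i = j) - of_bool (i = 0))) \<in> incidence_range n es"
    proof (rule incidence_range_lincomb, rule path_vector_in_incidence_range)
      fix j assume "j \<in> {..<n}"
      with assms(2) False show "(\<lambda>a b. (a, b) \<in> set es \<or> (b, a) \<in> set es)\<^sup>*\<^sup>* j 0"
        unfolding graph_connected_def by simp
    qed
    moreover have "(\<Sum>j<n. w j * (of_bool (i = j) - of_bool (i = 0))) = w i" if "i < n" for i
    proof -
      have "(\<Sum>j<n. w j * (of_bool (i = j) - of_bool (i = 0)))
            = (\<Sum>j<n. w j * of_bool (i = j)) - (\<Sum>j<n. w j) * of_bool (i = 0)"
        by (simp add: right_diff_distrib sum_subtractf sum_distrib_right)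
      also have "\<dots> = w i"
        using that sum0 by simp
      finally show ?thesis .
    qed
    ultimately show ?thesis by (rule incidence_range_cong)
  qed
qed

lemma cost_as_sum: "cost p q r s u = (\<Sum>i<p. q i * (u i)\<^sup>2 / 2 + r i * u i) + s"
proof -
  have "(\<Sum>i<p. u i * mv (Qmat q) p u i) = (\<Sum>i<p. q i * (u i)\<^sup>2)"
    by (rule sum.cong) (auto simp: mv_Qmat power2_eq_square)
  then show ?thesis
    unfolding cost_def by (simp add: sum.distrib sum_distrib_left sum_divide_distrib)
qed

lemma separable_quadratic_diff:
  fixes q r u v :: "nat \<Rightarrow> real"
  assumes "\<forall>i<p. q i * v i + r i = \<kappa>" "(\<Sum>i<p. u i) = (\<Sum>i<p. v i)"
  shows "(\<Sum>i<p. q i * (u i)\<^sup>2 / 2 + r i * u i) - (\<Sum>i<p. q i * (v i)\<^sup>2 / 2 + r i * v i)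
       = (\<Sum>i<p. q i * (u i - v i)\<^sup>2 / 2)"
proof -
  have "q i * (u i)\<^sup>2 / 2 + r i * u i - (q i * (v i)\<^sup>2 / 2 + r i * v i)
        = q i * (u i - v i)\<^sup>2 / 2 + \<kappa> * (u i - v i)" if "i < p" for i
  proof -
    have "\<kappa> = q i * v i + r i" using assms(1) that by simp
    then show ?thesis by (simp add: power2_eq_square field_simps)
  qed
  then have "(\<Sum>i<p. q i * (u i)\<^sup>2 / 2 + r i * u i) - (\<Sum>i<p. q i * (v i)\<^sup>2 / 2 + r i * v i)
        = (\<Sum>i<p. q i * (u i - v i)\<^sup>2 / 2 + \<kappa> * (u i - v i))"
    by (simp add: sum_subtractf[symmetric])
  also have "\<dots> = (\<Sum>i<p. q i * (u i - v i)\<^sup>2 / 2) + \<kappa> * ((\<Sum>i<p. u i) - (\<Sum>i<p. v i))"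
    by (simp add: sum.distrib sum_distrib_left sum_subtractf right_diff_distrib)
  finally show ?thesis using assms(2) by simp
qed

lemma separable_quadratic_min:
  assumes q: "\<forall>i<p. q i > 0" and "\<forall>i<p. q i * v i + r i = \<kappa>"
    and "(\<Sum>i<p. u i) = (\<Sum>i<p. v i)"
  shows "cost p q r s v \<le> cost p q r s u"
    and "cost p q r s u = cost p q r s v \<Longrightarrow> \<forall>i<p. u i = v i"
proof -
  have diff: "cost p q r s u - cost p q r s v = (\<Sum>i<p. q i * (u i - v i)\<^sup>2 / 2)"
    using separable_quadratic_diff[OF assms(2,3)] by (simp add: cost_as_sum)
  have nonneg: "\<forall>i\<in>{..<p}. 0 \<le> q i * (u i - v i)\<^sup>2 / 2"
    using q by (simp add: less_imp_le)
  have "0 \<le> (\<Sum>i<p. q i * (u i - v i)\<^sup>2 / 2)"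
    using nonneg by (blast intro: sum_nonneg)
  with diff show "cost p q r s v \<le> cost p q r s u" by simp
  assume "cost p q r s u = cost p q r s v"
  with diff have "(\<Sum>i<p. q i * (u i - v i)\<^sup>2 / 2) = 0" by simp
  then have zero: "\<forall>i\<in>{..<p}. q i * (u i - v i)\<^sup>2 / 2 = 0"
    using sum_nonneg_eq_0_iff[of "{..<p}" "\<lambda>i. q i * (u i - v i)\<^sup>2 / 2"] nonneg by blast
  show "\<forall>i<p. u i = v i"
  proof (intro allI impI)
    fix i assume "i < p"
    with zero have "q i * (u i - v i)\<^sup>2 = 0" by simp
    moreover have "q i \<noteq> 0" using q \<open>i < p\<close> by auto
    ultimately show "u i = v i" by simp
  qed
qed

lemma sum_Psi:
  assumes "graph_on n esc" "unit_columns n pc c"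
  shows "(\<Sum>i<n. Psi n esc pc c h \<gamma> \<eta> xbar i) = (\<Sum>i<n. d i) - (\<Sum>i<n. dhat n pc c h \<eta> d xbar i)"
  unfolding Psi_def dhat_def
  by (simp add: sum_subtractf sum_negf sum.distrib sum_mv_incidence[OF assms(1)]
      sum_mv_sel_matrix[OF assms(2)])

lemma feasible_iff_sum:
  assumes "graph_on n es" "graph_connected n es" "p \<le> n"
  shows "(\<exists>lam. feasible n es p psi d u lam) \<longleftrightarrow>
         (\<Sum>i<p. u i) = (\<Sum>i<n. d i) - (\<Sum>i<n. psi i)"
proof -
  have "(\<exists>lam. feasible n es p psi d u lam)
        \<longleftrightarrow> (\<lambda>i. psi i + mv Emat p u i - d i) \<in> incidence_range n es"
    unfolding feasible_def incidence_range_def mem_Collect_eq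
    by (intro ex_cong1 all_cong iffI) linarith+
  also have "\<dots> \<longleftrightarrow> (\<Sum>i<n. psi i) + (\<Sum>i<p. u i) - (\<Sum>i<n. d i) = 0"
    by (simp add: incidence_range_iff_sum_zero[OF assms(1,2)] sum_subtractf sum.distrib
        sum_mv_Emat[OF assms(3)])
  also have "\<dots> \<longleftrightarrow> (\<Sum>i<p. u i) = (\<Sum>i<n. d i) - (\<Sum>i<n. psi i)"
    by (rule iffI) linarith+
  finally show ?thesis .
qed

lemma kappa_hat_eq:
  assumes "p \<le> n" "j < n"
  shows "kappa_hat n p q r dh j = ((\<Sum>k<n. dh k) + (\<Sum>k<p. r k / q k)) / (\<Sum>k<p. 1 / q k)"
proof -
  have "(\<Sum>a<p. \<Sum>b<p. Qinv q a b) = (\<Sum>k<p. 1 / q k)"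
    by (simp add: Qinv_def)
  moreover have "(\<Sum>k<n. dh k + mv Emat p (mv (Qinv q) p r) k) = (\<Sum>k<n. dh k) + (\<Sum>k<p. r k / q k)"
    by (simp add: sum.distrib sum_mv_Emat[OF assms(1)] mv_Qinv)
  ultimately show ?thesis
    unfolding kappa_hat_def mtv_Emat[OF assms(2)] mv_const by simp
qed

lemma u_hat_multiplier:
  assumes "\<forall>i<p. q i > 0" "i < p"
  shows "q i * u_hat p q r \<kappa> i + r i = \<kappa> i"
proof -
  have "q i \<noteq> 0" using assms by auto
  with assms(2) show ?thesis by (simp add: u_hat_def mv_Qinv)
qed

lemma sum_u_hat:
  assumes "\<forall>i<p. q i > 0" "1 \<le> p" "p \<le> n"
  shows "(\<Sum>i<p. u_hat p q r (kappa_hat n p q r dh) i) = (\<Sum>k<n. dh k)"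
proof -
  define S where "S = (\<Sum>k<p. 1 / q k)"
  define K where "K = ((\<Sum>k<n. dh k) + (\<Sum>k<p. r k / q k)) / S"
  have "S > 0"
    unfolding S_def using assms(1,2) by (intro sum_pos) (auto simp: lessThan_empty_iff)
  have "(\<Sum>i<p. u_hat p q r (kappa_hat n p q r dh) i) = (\<Sum>i<p. K * (1 / q i) - r i / q i)"
    using assms(3) by (intro sum.cong) (simp_all add: u_hat_def mv_Qinv kappa_hat_eq K_def S_def
        diff_divide_distrib)
  also have "\<dots> = K * S - (\<Sum>i<p. r i / q i)"
    by (simp add: sum_subtractf sum_distrib_left S_def)
  also have "\<dots> = (\<Sum>k<n. dh k)"
    unfolding K_def using \<open>S > 0\<close> by simp
  finally show ?thesis .
qed

theorem lemma8:
  fixes n m p l pc :: nat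
    and es esc :: "(nat \<times> nat) list"
    and c :: "nat \<Rightarrow> nat"
    and d q r xbar :: "nat \<Rightarrow> real"
    and s :: real
    and h \<gamma> \<eta> :: "nat \<Rightarrow> real \<Rightarrow> real"
  assumes "graph_on n es" and "graph_connected n es" and "length es = m"
    and "graph_on n esc" and "length esc = l"
    and "1 \<le> p" and "p \<le> n"
    and "\<forall>i<p. q i > 0"
    and "unit_columns n pc c"
  shows
    "(let psi = Psi n esc pc c h \<gamma> \<eta> xbar;
          uh = u_hat p q r (kappa_hat n p q r (dhat n pc c h \<eta> d xbar))
      in (\<exists>lam. feasible n es p psi d uh lam) \<and>
         (\<forall>u lam. feasible n es p psi d u lam \<longrightarrow>
             cost p q r s uh \<le> cost p q r s u \<and>
             (cost p q r s u = cost p q r s uh \<longrightarrow> (\<forall>i<p. u i = uh i))))"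
proof -
  define psi where "psi = Psi n esc pc c h \<gamma> \<eta> xbar"
  define dh where "dh = dhat n pc c h \<eta> d xbar"
  define \<kappa> where "\<kappa> = kappa_hat n p q r dh"
  define uh where "uh = u_hat p q r \<kappa>"
  have feasible_sum: "(\<exists>lam. feasible n es p psi d u lam) \<longleftrightarrow> (\<Sum>i<p. u i) = (\<Sum>k<n. dh k)" for u
    using feasible_iff_sum[OF assms(1,2,7), of psi d u] sum_Psi[OF assms(4,9), of h \<gamma> \<eta> xbar d]
    unfolding psi_def dh_def by simp
  have sum_uh: "(\<Sum>i<p. uh i) = (\<Sum>k<n. dh k)"
    unfolding uh_def \<kappa>_def using sum_u_hat[OF assms(8,6,7)] .
  have multiplier: "\<forall>i<p. q i * uh i + r i = \<kappa> 0"
    using u_hat_multiplier[OF assms(8)] kappa_hat_eq[OF assms(7)] assms(6,7)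
    unfolding uh_def \<kappa>_def by simp
  show ?thesis
    unfolding Let_def psi_def[symmetric] dh_def[symmetric] \<kappa>_def[symmetric] uh_def[symmetric]
    using feasible_sum sum_uh separable_quadratic_min[OF assms(8) multiplier] by metis
qed

end
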